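(* Let $A\in\mathbb{R}^{n\times n}$, $B\in\mathbb{R}^{n\times m}$, $C\in\mathbb{R}^{p\times n}$ with $(A,C)$ observable and $(A,B)$ reachable, let $\ell$ be the observability index of $(A,C)$, and let $\mathbf{A}_\ell,\mathbf{B}_\ell$ be as in the context. Then the pair $(\mathbf{A}_\ell,\mathbf{B}_\ell)$ is reachable if and only if $p\ell=n$.
   Context: The observability index $\ell$ of an observable pair $(A,C)$ is the smallest $l$ with $\operatorname{rank}[C;CA;\dots;CA^{l-1}]=n$. Define $\mathcal{O}_\ell=[C;CA;\dots;CA^{\ell-1}]$; $\mathcal{T}_\ell\in\mathbb{R}^{p\ell\times m\ell}$ block lower triangular with $(i,j)$ block equal to $CA^{i-j-1}B$ if $i>j$ and $0$ otherwise; $\mathcal{R}_\ell=[A^{\ell-1}B\ \cdots\ AB\ B]$; $\mathcal{O}_\ell^{L}$ a fixed left inverse of $\mathcal{O}_\ell$. $\mathbf{F}_\ell=\mathrm{blockdiag}(S_p,S_m)$ where $S_q\in\mathbb{R}^{q\ell\times q\ell}$ has blocks $I_q$ at block positions $(i,i+1)$, $i=1,\dots,\ell-1$, zeros elsewhere; $\mathbf{L}_\ell\in\mathbb{R}^{(p\ell+m\ell)\times p}$ has $I_p$ in rows $p\ell-p+1,\dots,p\ell$, zeros elsewhere; $\mathbf{B}_\ell\in\mathbb{R}^{(p\ell+m\ell)\times m}$ has $I_m$ in its last $m$ rows, zeros elsewhere. $Z_\ell=[CA^\ell\mathcal{O}_\ell^L\ \ C\mathcal{R}_\ell-CA^\ell\mathcal{O}_\ell^L\mathcal{T}_\ell]$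 and $\mathbf{A}_\ell=\mathbf{F}_\ell+\mathbf{L}_\ell Z_\ell$. *)

theory Defs
  imports "Jordan_Normal_Form.DL_Rank"
begin

text \<open>Matrices are Jordan_Normal_Form matrices (type real mat) with explicit dimensions.
  All block indices below are 0-based.\<close>

definition mrank :: "real mat \<Rightarrow> nat" where
  "mrank M = vec_space.rank (dim_row M) M"

definition obs_mat :: "real mat \<Rightarrow> real mat \<Rightarrow> nat \<Rightarrow> real mat" where
  "obs_mat A C l = mat (dim_row C * l) (dim_col A)
     (\<lambda>(i,j). (C * A ^\<^sub>m (i div dim_row C)) $$ (i mod dim_row C, j))"

definition reach_mat :: "real mat \<Rightarrow> real mat \<Rightarrow> nat \<Rightarrow> real mat" where
  "reach_mat A B l = mat (dim_row A) (dim_col B * l)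
     (\<lambda>(i,j). (A ^\<^sub>m (l - 1 - j div dim_col B) * B) $$ (i, j mod dim_col B))"

definition observable :: "real mat \<Rightarrow> real mat \<Rightarrow> bool" where
  "observable A C \<longleftrightarrow> mrank (obs_mat A C (dim_row A)) = dim_row A"

definition reachable :: "real mat \<Rightarrow> real mat \<Rightarrow> bool" where
  "reachable A B \<longleftrightarrow> mrank (reach_mat A B (dim_row A)) = dim_row A"

definition obs_index :: "real mat \<Rightarrow> real mat \<Rightarrow> nat" where
  "obs_index A C = (LEAST l. mrank (obs_mat A C l) = dim_row A)"

definition toep_mat :: "real mat \<Rightarrow> real mat \<Rightarrow> real mat \<Rightarrow> nat \<Rightarrow> real mat" where
  "toep_mat A B C l = mat (dim_row C * l) (dim_col B * l)
     (\<lambda>(i,j). if j div dim_col B < i div dim_row C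
              then (C * A ^\<^sub>m (i div dim_row C - j div dim_col B - 1) * B) $$ (i mod dim_row C, j mod dim_col B)
              else 0)"

definition shift_mat :: "nat \<Rightarrow> nat \<Rightarrow> real mat" where
  "shift_mat q l = mat (q * l) (q * l) (\<lambda>(i,j). if j = i + q then 1 else 0)"

definition F_mat :: "nat \<Rightarrow> nat \<Rightarrow> nat \<Rightarrow> real mat" where
  "F_mat p m l = four_block_mat (shift_mat p l) (0\<^sub>m (p*l) (m*l)) (0\<^sub>m (m*l) (p*l)) (shift_mat m l)"

definition L_mat :: "nat \<Rightarrow> nat \<Rightarrow> nat \<Rightarrow> real mat" where
  "L_mat p m l = mat (p*l + m*l) p (\<lambda>(i,j). if i = p*l - p + j then 1 else 0)"

definition B_mat :: "nat \<Rightarrow> nat \<Rightarrow> nat \<Rightarrow> real mat" where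
  "B_mat p m l = mat (p*l + m*l) m (\<lambda>(i,j). if i = p*l + m*l - m + j then 1 else 0)"

text \<open>Z_l = [C A^l OL,  C R_l - C A^l OL T_l], size p x (p l + m l), OL a left inverse of O_l.\<close>
definition Z_mat :: "real mat \<Rightarrow> real mat \<Rightarrow> real mat \<Rightarrow> real mat \<Rightarrow> nat \<Rightarrow> real mat" where
  "Z_mat A B C OL l =
     (let X = C * A ^\<^sub>m l * OL;
          Y = C * reach_mat A B l - C * A ^\<^sub>m l * OL * toep_mat A B C l;
          p = dim_row C; m = dim_col B
      in mat p (p*l + m*l) (\<lambda>(i,j). if j < p*l then X $$ (i,j) else Y $$ (i, j - p*l)))"

definition A_mat :: "real mat \<Rightarrow> real mat \<Rightarrow> real mat \<Rightarrow> real mat \<Rightarrow> nat \<Rightarrow> real mat" where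
  "A_mat A B C OL l = F_mat (dim_row C) (dim_col B) l + L_mat (dim_row C) (dim_col B) l * Z_mat A B C OL l"

end

theory Submission
  imports Defs
begin

text \<open>
  Let Phi = [O_l T_l; 0 I]; it sends a state x and the inputs u of a window of length l to the
  outputs and inputs of that window. Since OL is a left inverse of O_l, Z_l Phi = [C A^l, C R_l],
  and a block computation gives A_l Phi = Phi A_ext and B_l = Phi B_ext, where
  A_ext = [A, [B 0 ... 0]; 0, S_m] and B_ext = [0; 0; ...; I_m] describe (A, B) fed through a shift
  register that stores the last l inputs. Hence the reachability matrix of (A_l, B_l) is Phi
  times that of (A_ext, B_ext).

  Full row rank of a matrix K means that x \<mapsto> K x is onto. If (A_l, B_l) is reachable, Phi is
  onto, so p l + m l \<le> n + m l, while n \<le> p l because O_l has a left inverse; thus p l = n.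
  Conversely, if p l = n then O_l is invertible and Phi is onto, and (A_ext, B_ext) is reachable:
  for k < l the columns of A_ext^k B_ext are the unit vectors of the register, and for k \<ge> l
  they are the columns of [A^(k-l) B; 0], so they include all columns of [R_n 0; 0 I].
\<close>

section \<open>Surjective matrices\<close>

definition surjective_mat :: "'a :: semiring_0 mat \<Rightarrow> bool" where
  "surjective_mat M \<longleftrightarrow> (\<forall>y \<in> carrier_vec (dim_row M). \<exists>x \<in> carrier_vec (dim_col M). M *\<^sub>v x = y)"

lemma (in vec_space) rank_eq_iff_col_space:
  assumes "M \<in> carrier_mat n nc"
  shows "rank M = n \<longleftrightarrow> col_space M = carrier_vec n"
proof
  assume r: "rank M = n"
  obtain S where S: "finite S" "maximal S (\<lambda>T. T \<subseteq> set (cols M) \<and> lin_indpt T)"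
    using maximal_exists_superset[of "set (cols M)" "\<lambda>T. T \<subseteq> set (cols M) \<and> lin_indpt T" "{}"]
    by (auto simp: lin_dep_def)
  have SM: "S \<subseteq> set (cols M)" "lin_indpt S" using S(2) unfolding maximal_def by auto
  have cM: "set (cols M) \<subseteq> carrier_vec n" using assms cols_dim[of M] by auto
  have "basis S"
    using rank_card_indpt[OF assms S(2)] r SM cM dim_is_n by (intro dim_li_is_basis[OF fin_dim S(1)]) auto
  then have "carrier V \<subseteq> span (set (cols M))"
    using span_is_monotone[OF SM(1)] unfolding basis_def by auto
  with span_is_subset2[OF cM] show "col_space M = carrier_vec n"
    unfolding col_space_def by auto
next
  assume "col_space M = carrier_vec n"
  then have "span_vs (set (cols M)) = V" unfolding col_space_def by simp
  then show "rank M = n" unfolding rank_def using dim_is_n by simp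
qed

lemma (in vec_space) surjective_mat_iff_col_space:
  assumes "M \<in> carrier_mat n nc"
  shows "surjective_mat M \<longleftrightarrow> col_space M = carrier_vec n"
  using assms unfolding surjective_mat_def col_space_eq[OF assms] by auto

lemma mrank_eq_dim_row_iff_surjective:
  "mrank M = dim_row M \<longleftrightarrow> surjective_mat M"
proof -
  interpret vec_space "TYPE(real)" "dim_row M" .
  have M: "M \<in> carrier_mat (dim_row M) (dim_col M)" by simp
  show ?thesis
    unfolding mrank_def rank_eq_iff_col_space[OF M] surjective_mat_iff_col_space[OF M] ..
qed

lemma reachable_iff_surjective: "reachable A B \<longleftrightarrow> surjective_mat (reach_mat A B (dim_row A))"
  unfolding reachable_def by (simp add: reach_mat_def flip: mrank_eq_dim_row_iff_surjective)

lemma surjective_mat_dim_row_le: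
  fixes M :: "real mat"
  assumes "surjective_mat M"
  shows "dim_row M \<le> dim_col M"
proof -
  interpret vec_space "TYPE(real)" "dim_row M" .
  have "rank M = dim_row M"
    using assms mrank_eq_dim_row_iff_surjective unfolding mrank_def by simp
  then show ?thesis using rank_le_nc[of M "dim_col M"] by simp
qed

lemma surjective_mat_if_right_inverse:
  fixes M N :: "'a :: semiring_1 mat"
  assumes "M \<in> carrier_mat nr nc" "N \<in> carrier_mat nc nr" "M * N = 1\<^sub>m nr"
  shows "surjective_mat M"
  unfolding surjective_mat_def
proof
  fix y :: "'a vec" assume "y \<in> carrier_vec (dim_row M)"
  then have "M *\<^sub>v (N *\<^sub>v y) = y" "N *\<^sub>v y \<in> carrier_vec (dim_col M)"
    using assms by (auto simp flip: assoc_mult_mat_vec)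
  then show "\<exists>x\<in>carrier_vec (dim_col M). M *\<^sub>v x = y" by blast
qed

lemma dim_le_if_right_inverse:
  fixes M N :: "real mat"
  assumes "M \<in> carrier_mat nr nc" "N \<in> carrier_mat nc nr" "M * N = 1\<^sub>m nr"
  shows "nr \<le> nc"
  using surjective_mat_dim_row_le[OF surjective_mat_if_right_inverse[OF assms]] assms(1) by simp

lemma surjective_mat_mult:
  fixes P X :: "'a :: semiring_0 mat"
  assumes "P \<in> carrier_mat nr k" "X \<in> carrier_mat k nc" "surjective_mat P" "surjective_mat X"
  shows "surjective_mat (P * X)"
  unfolding surjective_mat_def
proof
  fix y :: "'a vec" assume "y \<in> carrier_vec (dim_row (P * X))"
  then obtain z where z: "z \<in> carrier_vec k" "P *\<^sub>v z = y"
    using assms unfolding surjective_mat_def by auto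
  then obtain x where x: "x \<in> carrier_vec nc" "X *\<^sub>v x = z"
    using assms unfolding surjective_mat_def by auto
  then show "\<exists>x\<in>carrier_vec (dim_col (P * X)). P * X *\<^sub>v x = y"
    using assms z by (auto simp: assoc_mult_mat_vec)
qed

lemma surjective_mat_mult_imp_left:
  fixes P X :: "'a :: semiring_0 mat"
  assumes "P \<in> carrier_mat nr k" "X \<in> carrier_mat k nc" "surjective_mat (P * X)"
  shows "surjective_mat P"
  unfolding surjective_mat_def
proof
  fix y :: "'a vec" assume "y \<in> carrier_vec (dim_row P)"
  then obtain x where "x \<in> carrier_vec nc" "P * X *\<^sub>v x = y"
    using assms unfolding surjective_mat_def by auto
  then show "\<exists>z\<in>carrier_vec (dim_col P). P *\<^sub>v z = y"
    using assms by (auto simp: assoc_mult_mat_vec intro!: bexI[of _ "X *\<^sub>v x"])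
qed

lemma surjective_mat_mono_cols:
  fixes X Y :: "real mat"
  assumes X: "X \<in> carrier_mat nr k" and Y: "Y \<in> carrier_mat nr k'"
    and "set (cols Y) \<subseteq> set (cols X)" and "surjective_mat Y"
  shows "surjective_mat X"
proof -
  interpret vec_space "TYPE(real)" nr .
  have "col_space Y \<subseteq> col_space X"
    unfolding col_space_def using assms(3) by (rule span_is_monotone)
  moreover have "col_space X \<subseteq> carrier_vec nr"
    unfolding col_space_eq[OF X] using X by auto
  ultimately show ?thesis
    using assms(4) unfolding surjective_mat_iff_col_space[OF X] surjective_mat_iff_col_space[OF Y]
    by blast
qed

lemma surjective_mat_no_rows: "dim_row M = 0 \<Longrightarrow> surjective_mat M"
  unfolding surjective_mat_def by (auto intro!: bexI[of _ "0\<^sub>v (dim_col M)"])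

lemma surjective_mat_four_block_one:
  fixes P Q :: "'a :: ring_1 mat"
  assumes P: "P \<in> carrier_mat nr1 nc1" and Q: "Q \<in> carrier_mat nr1 nr2" and "surjective_mat P"
  shows "surjective_mat (four_block_mat P Q (0\<^sub>m nr2 nc1) (1\<^sub>m nr2))"
  unfolding surjective_mat_def
proof
  fix z :: "'a vec" assume "z \<in> carrier_vec (dim_row (four_block_mat P Q (0\<^sub>m nr2 nc1) (1\<^sub>m nr2)))"
  then have z: "z = vec_first z nr1 @\<^sub>v vec_last z nr2" using P by auto
  define u where "u = vec_last z nr2"
  have u: "u \<in> carrier_vec nr2" by (simp add: u_def)
  have "vec_first z nr1 - Q *\<^sub>v u \<in> carrier_vec (dim_row P)" using P Q u by simp
  then obtain x where x: "x \<in> carrier_vec nc1" "P *\<^sub>v x = vec_first z nr1 - Q *\<^sub>v u"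
    using assms unfolding surjective_mat_def by (metis carrier_matD(2))
  have "four_block_mat P Q (0\<^sub>m nr2 nc1) (1\<^sub>m nr2) *\<^sub>v (x @\<^sub>v u)
      = (P *\<^sub>v x + Q *\<^sub>v u) @\<^sub>v (0\<^sub>m nr2 nc1 *\<^sub>v x + 1\<^sub>m nr2 *\<^sub>v u)"
    using P Q x u by (intro four_block_mat_mult_vec) auto
  also have "P *\<^sub>v x + Q *\<^sub>v u = vec_first z nr1"
    using x(2) Q u by auto
  also have "0\<^sub>m nr2 nc1 *\<^sub>v x + 1\<^sub>m nr2 *\<^sub>v u = u"
    using x u by (auto intro!: eq_vecI)
  finally have "four_block_mat P Q (0\<^sub>m nr2 nc1) (1\<^sub>m nr2) *\<^sub>v (x @\<^sub>v u) = z"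
    unfolding u_def by (simp flip: z)
  then show "\<exists>v\<in>carrier_vec (dim_col (four_block_mat P Q (0\<^sub>m nr2 nc1) (1\<^sub>m nr2))).
      four_block_mat P Q (0\<^sub>m nr2 nc1) (1\<^sub>m nr2) *\<^sub>v v = z"
    using P x u by (intro bexI[of _ "x @\<^sub>v u"]) auto
qed

section \<open>Block unit matrices and shift matrices\<close>

lemma less_mult_blockE:
  fixes i q l :: nat
  assumes "i < q * l"
  obtains k a where "k < l" "a < q" "i = k * q + a"
proof
  have "0 < q" using assms by (cases q) auto
  then show "i div q < l" "i mod q < q"
    using assms by (simp_all add: div_less_iff_less_mult mult.commute)
qed simp

lemma mult_add_eq_mult_add_iff:
  fixes a b k t q :: nat
  assumes "a < q" "t < q"
  shows "k * q + a = b * q + t \<longleftrightarrow> k = b \<and> a = t"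
  by (metis assms add.commute div_mult_self1 div_less mod_mult_self1 mod_less add_0 not_less0)

lemma block_index_less_iff [simp]:
  fixes k a q l :: nat
  assumes "a < q"
  shows "k * q + a < q * l \<longleftrightarrow> k < l"
proof
  assume "k < l"
  have "k * q + a < Suc k * q" using assms by simp
  also have "\<dots> \<le> l * q" using \<open>k < l\<close> by (intro mult_le_mono1) simp
  finally show "k * q + a < q * l" by (simp add: mult.commute)
next
  assume "k * q + a < q * l"
  then have "k * q < l * q" by (metis mult.commute le_add1 le_less_trans)
  then show "k < l" by simp
qed

lemma eq_row_blocks_matI:
  assumes "M \<in> carrier_mat (q * l) c" "N \<in> carrier_mat (q * l) c"
    and "\<And>k a j. k < l \<Longrightarrow> a < q \<Longrightarrow> j < c \<Longrightarrow> M $$ (k * q + a, j) = N $$ (k * q + a, j)"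
  shows "M = N"
proof (rule eq_matI)
  fix i j assume "i < dim_row N" "j < dim_col N"
  then show "M $$ (i, j) = N $$ (i, j)"
    using assms by (auto elim!: less_mult_blockE)
qed (use assms in auto)

definition block_unit_mat :: "nat \<Rightarrow> nat \<Rightarrow> nat \<Rightarrow> real mat" where
  "block_unit_mat q l b = mat (q * l) q (\<lambda>(i, j). if i = b * q + j then 1 else 0)"

lemma block_unit_mat_carrier [simp]: "block_unit_mat q l b \<in> carrier_mat (q * l) q"
  and dim_block_unit_mat [simp]:
    "dim_row (block_unit_mat q l b) = q * l" "dim_col (block_unit_mat q l b) = q"
  by (simp_all add: block_unit_mat_def)

lemma index_block_unit_mat:
  "k < l \<Longrightarrow> a < q \<Longrightarrow> j < q \<Longrightarrow>
    block_unit_mat q l b $$ (k * q + a, j) = (if k = b \<and> a = j then 1 else 0)"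
  by (simp add: block_unit_mat_def mult_add_eq_mult_add_iff block_index_less_iff)

lemma row_block_unit_mat:
  "k < l \<Longrightarrow> a < q \<Longrightarrow>
    row (block_unit_mat q l b) (k * q + a) = (if k = b then unit_vec q a else 0\<^sub>v q)"
  by (rule eq_vecI) (auto simp: block_unit_mat_def mult_add_eq_mult_add_iff block_index_less_iff)

lemma col_block_unit_mat:
  "b < l \<Longrightarrow> d < q \<Longrightarrow> col (block_unit_mat q l b) d = unit_vec (q * l) (b * q + d)"
  by (rule eq_vecI) (auto simp: block_unit_mat_def block_index_less_iff)

lemma index_block_unit_mat_mult:
  assumes "W \<in> carrier_mat q c" "k < l" "a < q" "j < c"
  shows "(block_unit_mat q l b * W) $$ (k * q + a, j) = (if k = b then W $$ (a, j) else 0)"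
  using assms by (simp add: block_index_less_iff row_block_unit_mat)

lemma index_mult_block_unit_mat:
  assumes "X \<in> carrier_mat r (q * l)" "i < r" "b < l" "d < q"
  shows "(X * block_unit_mat q l b) $$ (i, d) = X $$ (i, b * q + d)"
  using assms by (simp add: block_index_less_iff col_block_unit_mat)

lemma unit_vec_out_of_range: "n \<le> s \<Longrightarrow> unit_vec n s = 0\<^sub>v n"
  by (auto simp: unit_vec_def)

lemma shift_mat_carrier [simp]: "shift_mat q l \<in> carrier_mat (q * l) (q * l)"
  and dim_shift_mat [simp]: "dim_row (shift_mat q l) = q * l" "dim_col (shift_mat q l) = q * l"
  by (simp_all add: shift_mat_def)

lemma row_shift_mat: "i < q * l \<Longrightarrow> row (shift_mat q l) i = unit_vec (q * l) (i + q)"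
  by (auto simp: shift_mat_def unit_vec_def)

lemma col_shift_mat:
  "j < q * l \<Longrightarrow> col (shift_mat q l) j = (if q \<le> j then unit_vec (q * l) (j - q) else 0\<^sub>v (q * l))"
  by (auto simp: shift_mat_def unit_vec_def)

lemma index_shift_mat_mult:
  assumes "X \<in> carrier_mat (q * l) c" "k < l" "a < q" "j < c"
  shows "(shift_mat q l * X) $$ (k * q + a, j) = (if Suc k < l then X $$ (Suc k * q + a, j) else 0)"
proof -
  have "k * q + a < q * l" using assms by simp
  then have "row (shift_mat q l) (k * q + a) = unit_vec (q * l) (k * q + a + q)"
    by (rule row_shift_mat)
  then have row: "row (shift_mat q l) (k * q + a) = unit_vec (q * l) (Suc k * q + a)"
    by (simp add: add.commute add.left_commute)
  have in_range: "Suc k * q + a < q * l \<longleftrightarrow> Suc k < l"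
    using assms(3) by (rule block_index_less_iff)
  show ?thesis
  proof (cases "Suc k < l")
    case True
    then show ?thesis using assms in_range by (simp add: row del: mult_Suc)
  next
    case False
    then have "q * l \<le> Suc k * q + a" using in_range by linarith
    then show ?thesis using assms False by (simp add: row unit_vec_out_of_range del: mult_Suc)
  qed
qed

lemma index_mult_shift_mat:
  assumes "X \<in> carrier_mat r (q * l)" "i < r" "c < l" "d < q"
  shows "(X * shift_mat q l) $$ (i, c * q + d) = (if c = 0 then 0 else X $$ (i, (c - 1) * q + d))"
proof (cases c)
  case 0
  have "d < q * l" using block_index_less_iff[of d q 0 l] assms by simp
  then show ?thesis using assms 0 by (simp add: col_shift_mat)
next
  case (Suc c')
  have "c * q + d < q * l" using assms(3,4) by simp
  moreover have "q \<le> c * q + d" "c * q + d - q = c' * q + d" using Suc by simp_all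
  ultimately have col: "col (shift_mat q l) (c * q + d) = unit_vec (q * l) (c' * q + d)"
    by (simp add: col_shift_mat)
  have "c' * q + d < q * l" "c \<noteq> 0" "c - 1 = c'" using Suc assms by simp_all
  then show ?thesis using assms by (simp add: col)
qed

section \<open>Block structure of the observability, Toeplitz and reachability matrices\<close>

lemma obs_mat_carrier:
  "A \<in> carrier_mat n n \<Longrightarrow> C \<in> carrier_mat p n \<Longrightarrow> obs_mat A C l \<in> carrier_mat (p * l) n"
  by (simp add: obs_mat_def)

lemma toep_mat_carrier:
  "B \<in> carrier_mat n m \<Longrightarrow> C \<in> carrier_mat p n \<Longrightarrow> toep_mat A B C l \<in> carrier_mat (p * l) (m * l)"
  by (simp add: toep_mat_def)

lemma reach_mat_carrier:
  "A \<in> carrier_mat n n \<Longrightarrow> B \<in> carrier_mat n m \<Longrightarrow> reach_mat A B N \<in> carrier_mat n (m * N)"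
  by (simp add: reach_mat_def)

lemma index_obs_mat:
  assumes "A \<in> carrier_mat n n" "C \<in> carrier_mat p n" "k < l" "a < p" "j < n"
  shows "obs_mat A C l $$ (k * p + a, j) = (C * A ^\<^sub>m k) $$ (a, j)"
  using assms by (simp add: obs_mat_def)

lemma index_obs_mat_mult:
  assumes A: "A \<in> carrier_mat n n" and C: "C \<in> carrier_mat p n" and "X \<in> carrier_mat n c"
    and "k < l" "a < p" "j < c"
  shows "(obs_mat A C l * X) $$ (k * p + a, j) = (C * A ^\<^sub>m k * X) $$ (a, j)"
proof -
  have CAk: "C * A ^\<^sub>m k \<in> carrier_mat p n" using A C by simp
  have "row (obs_mat A C l) (k * p + a) = row (C * A ^\<^sub>m k) a"
  proof (rule eq_vecI)
    fix i assume i: "i < dim_vec (row (C * A ^\<^sub>m k) a)"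
    have "i < n" using carrier_matD[OF CAk] i by simp
    then show "row (obs_mat A C l) (k * p + a) $ i = row (C * A ^\<^sub>m k) a $ i"
      using assms CAk by (simp add: obs_mat_def)
  qed (use A C CAk in \<open>simp add: obs_mat_def\<close>)
  then show ?thesis using assms CAk obs_mat_carrier[OF A C, of l] by simp
qed

lemma index_toep_mat:
  assumes "B \<in> carrier_mat n m" "C \<in> carrier_mat p n" "k < l" "a < p" "c < l" "d < m"
  shows "toep_mat A B C l $$ (k * p + a, c * m + d)
    = (if c < k then (C * A ^\<^sub>m (k - c - 1) * B) $$ (a, d) else 0)"
  using assms by (simp add: toep_mat_def)

lemma col_reach_mat:
  assumes "A \<in> carrier_mat n n" "B \<in> carrier_mat n m" "c < N" "d < m"
  shows "col (reach_mat A B N) (c * m + d) = col (A ^\<^sub>m (N - 1 - c) * B) d"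
  using assms by (intro eq_vecI) (simp_all add: reach_mat_def)

lemma index_mult_reach_mat:
  assumes A: "A \<in> carrier_mat n n" and B: "B \<in> carrier_mat n m" and Y: "Y \<in> carrier_mat r n"
    and "i < r" "c < N" "d < m"
  shows "(Y * reach_mat A B N) $$ (i, c * m + d) = (Y * A ^\<^sub>m (N - 1 - c) * B) $$ (i, d)"
proof -
  have "(Y * reach_mat A B N) $$ (i, c * m + d) = row Y i \<bullet> col (reach_mat A B N) (c * m + d)"
    using assms reach_mat_carrier[OF A B, of N] by simp
  also have "\<dots> = (Y * (A ^\<^sub>m (N - 1 - c) * B)) $$ (i, d)"
    using assms by (simp add: col_reach_mat)
  also have "\<dots> = (Y * A ^\<^sub>m (N - 1 - c) * B) $$ (i, d)"
    using assoc_mult_mat[OF Y pow_carrier_mat[OF A] B] by simp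
  finally show ?thesis .
qed

lemma set_cols_reach_mat:
  assumes "A \<in> carrier_mat n n" "B \<in> carrier_mat n m"
  shows "set (cols (reach_mat A B N)) = {col (A ^\<^sub>m k * B) d | k d. k < N \<and> d < m}"
proof -
  have "set (cols (reach_mat A B N)) = {col (reach_mat A B N) j | j. j < m * N}"
    using reach_mat_carrier[OF assms, of N] by (auto simp: cols_def)
  also have "\<dots> = {col (reach_mat A B N) (c * m + d) | c d. c < N \<and> d < m}"
    by (auto elim!: less_mult_blockE)
  also have "\<dots> = {col (A ^\<^sub>m (N - 1 - c) * B) d | c d. c < N \<and> d < m}"
    using assms by (intro Collect_cong ex_cong1) (auto simp: col_reach_mat)
  also have "\<dots> = {col (A ^\<^sub>m k * B) d | k d. k < N \<and> d < m}" (is "?L = ?R")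
  proof
    show "?L \<subseteq> ?R"
    proof
      fix v assume "v \<in> ?L"
      then obtain c d where "v = col (A ^\<^sub>m (N - 1 - c) * B) d" "c < N" "d < m" by blast
      then show "v \<in> ?R" by (intro CollectI exI[of _ "N - 1 - c"] exI[of _ d]) auto
    qed
    show "?R \<subseteq> ?L"
    proof
      fix v assume "v \<in> ?R"
      then obtain k d where "v = col (A ^\<^sub>m k * B) d" "k < N" "d < m" by blast
      then show "v \<in> ?L" by (intro CollectI exI[of _ "N - 1 - k"] exI[of _ d]) auto
    qed
  qed
  finally show ?thesis .
qed

definition first_block_mat :: "real mat \<Rightarrow> nat \<Rightarrow> real mat" where
  "first_block_mat B l = mat (dim_row B) (dim_col B * l) (\<lambda>(i, j). if j < dim_col B then B $$ (i, j) else 0)"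

lemma first_block_mat_carrier:
  "B \<in> carrier_mat n m \<Longrightarrow> first_block_mat B l \<in> carrier_mat n (m * l)"
  by (simp add: first_block_mat_def)

lemma index_mult_first_block_mat:
  assumes B: "B \<in> carrier_mat n m" and "Y \<in> carrier_mat r n" "i < r" "c < l" "d < m"
  shows "(Y * first_block_mat B l) $$ (i, c * m + d) = (if c = 0 then (Y * B) $$ (i, d) else 0)"
proof -
  have "c * m + d < m \<longleftrightarrow> c = 0" using \<open>d < m\<close> by (cases c) auto
  then have "col (first_block_mat B l) (c * m + d) = (if c = 0 then col B d else 0\<^sub>v n)"
    using assms by (intro eq_vecI) (auto simp: first_block_mat_def)
  then show ?thesis using assms first_block_mat_carrier[OF B, of l] by simp
qed

lemma first_block_mat_mult_block_unit_mat:
  assumes B: "B \<in> carrier_mat n m" and "b < l"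
  shows "first_block_mat B l * block_unit_mat m l b = (if b = 0 then B else 0\<^sub>m n m)"
proof (rule eq_matI)
  fix i d assume "i < dim_row (if b = 0 then B else 0\<^sub>m n m)" "d < dim_col (if b = 0 then B else 0\<^sub>m n m)"
  then have "i < n" "d < m" using B by (auto split: if_splits)
  have "b * m + d < m \<longleftrightarrow> b = 0" using \<open>d < m\<close> by (cases b) auto
  moreover have "(first_block_mat B l * block_unit_mat m l b) $$ (i, d) = first_block_mat B l $$ (i, b * m + d)"
    using first_block_mat_carrier[OF B] \<open>i < n\<close> \<open>b < l\<close> \<open>d < m\<close> by (rule index_mult_block_unit_mat)
  ultimately show "(first_block_mat B l * block_unit_mat m l b) $$ (i, d)
      = (if b = 0 then B else 0\<^sub>m n m) $$ (i, d)"
    using assms \<open>i < n\<close> \<open>d < m\<close> by (simp add: first_block_mat_def)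
qed (use B in \<open>auto simp: first_block_mat_def\<close>)

lemma shift_obs_mat:
  assumes A: "A \<in> carrier_mat n n" and C: "C \<in> carrier_mat p n"
  shows "shift_mat p l * obs_mat A C l + block_unit_mat p l (l - 1) * (C * A ^\<^sub>m l)
    = obs_mat A C l * A"
proof (rule eq_row_blocks_matI)
  have Ob: "obs_mat A C l \<in> carrier_mat (p * l) n" using A C by (rule obs_mat_carrier)
  have CAl: "C * A ^\<^sub>m l \<in> carrier_mat p n" using A C by simp
  then show "shift_mat p l * obs_mat A C l + block_unit_mat p l (l - 1) * (C * A ^\<^sub>m l)
      \<in> carrier_mat (p * l) n" using mult_carrier_mat[OF block_unit_mat_carrier] by simp
  show "obs_mat A C l * A \<in> carrier_mat (p * l) n" using A Ob by simp
  fix k a j assume k: "k < l" and a: "a < p" and j: "j < n"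
  have "(shift_mat p l * obs_mat A C l + block_unit_mat p l (l - 1) * (C * A ^\<^sub>m l)) $$ (k * p + a, j)
      = (shift_mat p l * obs_mat A C l) $$ (k * p + a, j)
        + (block_unit_mat p l (l - 1) * (C * A ^\<^sub>m l)) $$ (k * p + a, j)"
    using A C k a j by simp
  also have "\<dots> = (if Suc k < l then (C * A ^\<^sub>m (Suc k)) $$ (a, j) else 0)
        + (if k = l - 1 then (C * A ^\<^sub>m l) $$ (a, j) else 0)"
    using A C a j index_shift_mat_mult[OF Ob k a j] index_block_unit_mat_mult[OF CAl k a j]
    by (simp add: index_obs_mat del: mult_Suc index_mult_mat(1))
  also have "\<dots> = (C * A ^\<^sub>m (Suc k)) $$ (a, j)"
  proof (cases "Suc k < l")
    case False
    then have "l = Suc k" using k by simp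
    then show ?thesis by simp
  qed simp
  also have "\<dots> = (obs_mat A C l * A) $$ (k * p + a, j)"
    using A C k a j assoc_mult_mat[OF C pow_carrier_mat[OF A] A] by (simp add: index_obs_mat_mult)
  finally show "(shift_mat p l * obs_mat A C l + block_unit_mat p l (l - 1) * (C * A ^\<^sub>m l)) $$ (k * p + a, j)
      = (obs_mat A C l * A) $$ (k * p + a, j)" .
qed

lemma index_shift_toep_mat_add:
  assumes A: "A \<in> carrier_mat n n" and B: "B \<in> carrier_mat n m" and C: "C \<in> carrier_mat p n"
    and k: "k < l" and a: "a < p" and c: "c < l" and d: "d < m"
  shows "(shift_mat p l * toep_mat A B C l + block_unit_mat p l (l - 1) * (C * reach_mat A B l))
      $$ (k * p + a, c * m + d) = (if c \<le> k then (C * A ^\<^sub>m (k - c) * B) $$ (a, d) else 0)"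
proof -
  have T: "toep_mat A B C l \<in> carrier_mat (p * l) (m * l)" using B C by (rule toep_mat_carrier)
  have CR: "C * reach_mat A B l \<in> carrier_mat p (m * l)"
    using C reach_mat_carrier[OF A B] by (rule mult_carrier_mat)
  have jl: "c * m + d < m * l" using c d by simp
  have "(shift_mat p l * toep_mat A B C l + block_unit_mat p l (l - 1) * (C * reach_mat A B l))
      $$ (k * p + a, c * m + d)
      = (shift_mat p l * toep_mat A B C l) $$ (k * p + a, c * m + d)
        + (block_unit_mat p l (l - 1) * (C * reach_mat A B l)) $$ (k * p + a, c * m + d)"
    using A B C k a jl by (simp add: reach_mat_carrier[OF A B, THEN carrier_matD(2)])
  also have "\<dots> = (if Suc k < l then (if c < Suc k then (C * A ^\<^sub>m (Suc k - c - 1) * B) $$ (a, d) else 0)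
        else 0) + (if k = l - 1 then (C * A ^\<^sub>m (l - 1 - c) * B) $$ (a, d) else 0)"
    using index_shift_mat_mult[OF T k a jl] index_block_unit_mat_mult[OF CR k a jl]
      index_toep_mat[OF B C _ a c d] index_mult_reach_mat[OF A B C a c d]
    by (simp del: mult_Suc index_mult_mat(1))
  also have "\<dots> = (if c \<le> k then (C * A ^\<^sub>m (k - c) * B) $$ (a, d) else 0)"
  proof (cases "Suc k < l")
    case False
    then have "l = Suc k" using k by simp
    then show ?thesis using c by simp
  qed simp
  finally show ?thesis .
qed

lemma index_obs_first_block_toep_shift_add:
  assumes A: "A \<in> carrier_mat n n" and B: "B \<in> carrier_mat n m" and C: "C \<in> carrier_mat p n"
    and k: "k < l" and a: "a < p" and c: "c < l" and d: "d < m"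
  shows "(obs_mat A C l * first_block_mat B l + toep_mat A B C l * shift_mat m l)
      $$ (k * p + a, c * m + d) = (if c \<le> k then (C * A ^\<^sub>m (k - c) * B) $$ (a, d) else 0)"
proof -
  have T: "toep_mat A B C l \<in> carrier_mat (p * l) (m * l)" using B C by (rule toep_mat_carrier)
  have FB: "first_block_mat B l \<in> carrier_mat n (m * l)" using B by (rule first_block_mat_carrier)
  have CAk: "C * A ^\<^sub>m k \<in> carrier_mat p n" using A C by simp
  have jl: "c * m + d < m * l" using c d by simp
  have "(obs_mat A C l * first_block_mat B l + toep_mat A B C l * shift_mat m l) $$ (k * p + a, c * m + d)
      = (obs_mat A C l * first_block_mat B l) $$ (k * p + a, c * m + d)
      + (toep_mat A B C l * shift_mat m l) $$ (k * p + a, c * m + d)"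
    using T k a jl by simp
  also have "\<dots> = (if c = 0 then (C * A ^\<^sub>m k * B) $$ (a, d) else 0)
      + (if c = 0 then 0 else if c - 1 < k then (C * A ^\<^sub>m (k - (c - 1) - 1) * B) $$ (a, d) else 0)"
    using index_obs_mat_mult[OF A C FB k a jl] index_mult_first_block_mat[OF B CAk a c d]
      index_mult_shift_mat[OF T _ c d] index_toep_mat[OF B C k a _ d] k a c
    by (simp del: index_mult_mat(1))
  also have "\<dots> = (if c \<le> k then (C * A ^\<^sub>m (k - c) * B) $$ (a, d) else 0)"
    by (cases c) auto
  finally show ?thesis .
qed

lemma shift_toep_mat:
  assumes A: "A \<in> carrier_mat n n" and B: "B \<in> carrier_mat n m" and C: "C \<in> carrier_mat p n"
  shows "shift_mat p l * toep_mat A B C l + block_unit_mat p l (l - 1) * (C * reach_mat A B l)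
    = obs_mat A C l * first_block_mat B l + toep_mat A B C l * shift_mat m l"
proof (rule eq_row_blocks_matI)
  have T: "toep_mat A B C l \<in> carrier_mat (p * l) (m * l)" using B C by (rule toep_mat_carrier)
  have CR: "C * reach_mat A B l \<in> carrier_mat p (m * l)"
    using C reach_mat_carrier[OF A B] by (rule mult_carrier_mat)
  show "shift_mat p l * toep_mat A B C l + block_unit_mat p l (l - 1) * (C * reach_mat A B l)
      \<in> carrier_mat (p * l) (m * l)"
    using mult_carrier_mat[OF block_unit_mat_carrier CR] by simp
  show "obs_mat A C l * first_block_mat B l + toep_mat A B C l * shift_mat m l
      \<in> carrier_mat (p * l) (m * l)"
    using T by simp
  fix k a j assume k: "k < l" and a: "a < p" and "j < m * l"
  then obtain c d where c: "c < l" and d: "d < m" and j: "j = c * m + d"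
    by (auto elim: less_mult_blockE)
  show "(shift_mat p l * toep_mat A B C l + block_unit_mat p l (l - 1) * (C * reach_mat A B l))
      $$ (k * p + a, j) = (obs_mat A C l * first_block_mat B l + toep_mat A B C l * shift_mat m l)
      $$ (k * p + a, j)"
    unfolding j index_shift_toep_mat_add[OF A B C k a c d]
      index_obs_first_block_toep_shift_add[OF A B C k a c d] ..
qed

lemma shift_mat_mult_block_unit_mat:
  assumes "b < l"
  shows "shift_mat q l * block_unit_mat q l b
    = (if b = 0 then 0\<^sub>m (q * l) q else block_unit_mat q l (b - 1))"
proof (rule eq_row_blocks_matI)
  show "shift_mat q l * block_unit_mat q l b \<in> carrier_mat (q * l) q"
    using shift_mat_carrier block_unit_mat_carrier by (rule mult_carrier_mat)
  fix k a d assume k: "k < l" and a: "a < q" and d: "d < q"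
  have "Suc k = b \<longleftrightarrow> b \<noteq> 0 \<and> k = b - 1" by auto
  then show "(shift_mat q l * block_unit_mat q l b) $$ (k * q + a, d)
      = (if b = 0 then 0\<^sub>m (q * l) q else block_unit_mat q l (b - 1)) $$ (k * q + a, d)"
    using assms k a d index_shift_mat_mult[OF block_unit_mat_carrier k a d]
    by (simp add: index_block_unit_mat del: index_mult_mat(1) mult_Suc)
qed simp

lemma toep_mat_mult_last_block_unit_mat:
  assumes B: "B \<in> carrier_mat n m" and C: "C \<in> carrier_mat p n"
  shows "toep_mat A B C l * block_unit_mat m l (l - 1) = 0\<^sub>m (p * l) m"
proof (rule eq_row_blocks_matI)
  have T: "toep_mat A B C l \<in> carrier_mat (p * l) (m * l)" using B C by (rule toep_mat_carrier)
  then show "toep_mat A B C l * block_unit_mat m l (l - 1) \<in> carrier_mat (p * l) m" by simp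
  fix k a d assume k: "k < l" and a: "a < p" and d: "d < m"
  have "l - 1 < l" using k by simp
  then show "(toep_mat A B C l * block_unit_mat m l (l - 1)) $$ (k * p + a, d) = 0\<^sub>m (p * l) m $$ (k * p + a, d)"
    using B C T k a d by (simp add: index_mult_block_unit_mat index_toep_mat del: index_mult_mat(1))
qed simp

section \<open>Stacked matrices and intertwined pairs\<close>

lemma col_append_rows:
  assumes "X \<in> carrier_mat nr1 nc" "Y \<in> carrier_mat nr2 nc" "j < nc"
  shows "col (X @\<^sub>r Y) j = col X j @\<^sub>v col Y j"
proof -
  have "dim_row X = nr1" "dim_row Y = nr2" using assms by auto
  then show ?thesis unfolding append_rows_def
    using col_four_block_mat(1)[OF assms(1) zero_carrier_mat assms(2) zero_carrier_mat assms(3)] by simp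
qed

lemma four_block_mat_mult_append_rows:
  fixes P Q R S X Y :: "'a :: semiring_0 mat"
  assumes "P \<in> carrier_mat nr1 nc1" "Q \<in> carrier_mat nr1 nc2" "R \<in> carrier_mat nr2 nc1"
    "S \<in> carrier_mat nr2 nc2" "X \<in> carrier_mat nc1 c" "Y \<in> carrier_mat nc2 c"
  shows "four_block_mat P Q R S * (X @\<^sub>r Y) = (P * X + Q * Y) @\<^sub>r (R * X + S * Y)"
proof -
  have "four_block_mat P Q R S * (X @\<^sub>r Y)
      = four_block_mat (P * X + Q * Y) (P * 0\<^sub>m nc1 0 + Q * 0\<^sub>m nc2 0)
          (R * X + S * Y) (R * 0\<^sub>m nc1 0 + S * 0\<^sub>m nc2 0)"
    using mult_four_block_mat[OF assms(1-5) zero_carrier_mat assms(6) zero_carrier_mat] assms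
    by (simp add: append_rows_def)
  also have "\<dots> = (P * X + Q * Y) @\<^sub>r (R * X + S * Y)"
    unfolding append_rows_def using assms by (intro cong_four_block_mat) auto
  finally show ?thesis .
qed

lemma L_mat_append_rows: "L_mat p m l = block_unit_mat p l (l - 1) @\<^sub>r 0\<^sub>m (m * l) p"
proof (rule eq_matI)
  fix i j assume "i < dim_row (block_unit_mat p l (l - 1) @\<^sub>r 0\<^sub>m (m * l) p)"
    and "j < dim_col (block_unit_mat p l (l - 1) @\<^sub>r 0\<^sub>m (m * l) p)"
  then have i: "i < p * l + m * l" and j: "j < p" by (auto simp: append_rows_def)
  moreover have "i = p * l - p + j \<longleftrightarrow> i < p * l \<and> i = (l - 1) * p + j"
    using i j by (cases l) auto
  ultimately show "L_mat p m l $$ (i, j) = (block_unit_mat p l (l - 1) @\<^sub>r 0\<^sub>m (m * l) p) $$ (i, j)"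
    by (auto simp: L_mat_def append_rows_def block_unit_mat_def)
qed (auto simp: L_mat_def append_rows_def)

lemma B_mat_append_rows:
  assumes "0 < l"
  shows "B_mat p m l = 0\<^sub>m (p * l) m @\<^sub>r block_unit_mat m l (l - 1)"
proof (rule eq_matI)
  fix i j assume "i < dim_row (0\<^sub>m (p * l) m @\<^sub>r block_unit_mat m l (l - 1))"
    and "j < dim_col (0\<^sub>m (p * l) m @\<^sub>r block_unit_mat m l (l - 1))"
  then have "i < p * l + m * l" "j < m" by (auto simp: append_rows_def)
  moreover have "p * l + m * l - m + j = p * l + ((l - 1) * m + j)"
    using assms by (cases l) simp_all
  ultimately show "B_mat p m l $$ (i, j) = (0\<^sub>m (p * l) m @\<^sub>r block_unit_mat m l (l - 1)) $$ (i, j)"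
    by (auto simp: B_mat_def append_rows_def block_unit_mat_def)
qed (auto simp: B_mat_def append_rows_def)

lemma Z_mat_four_block:
  assumes A: "A \<in> carrier_mat n n" and B: "B \<in> carrier_mat n m" and C: "C \<in> carrier_mat p n"
    and OL: "OL \<in> carrier_mat n (p * l)"
  shows "Z_mat A B C OL l = four_block_mat (C * A ^\<^sub>m l * OL)
    (C * reach_mat A B l - C * A ^\<^sub>m l * OL * toep_mat A B C l) (0\<^sub>m 0 (p * l)) (0\<^sub>m 0 (m * l))"
proof -
  define X where "X = C * A ^\<^sub>m l * OL"
  define Y where "Y = C * reach_mat A B l - C * A ^\<^sub>m l * OL * toep_mat A B C l"
  have X: "X \<in> carrier_mat p (p * l)"
    unfolding X_def using mult_carrier_mat[OF mult_carrier_mat[OF C pow_carrier_mat[OF A]] OL] .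
  moreover have "Y \<in> carrier_mat p (m * l)"
    unfolding Y_def X_def[symmetric]
    using mult_carrier_mat[OF X toep_mat_carrier[OF B C]] by (rule minus_carrier_mat)
  moreover have "dim_row C = p" "dim_col B = m" using B C by auto
  ultimately show ?thesis
    unfolding Z_mat_def Let_def X_def[symmetric] Y_def[symmetric] by (intro eq_matI) auto
qed

lemma pow_mat_intertwine:
  assumes A': "A' \<in> carrier_mat N' N'" and P: "P \<in> carrier_mat N' n'" and M: "M \<in> carrier_mat n' n'"
    and AP: "A' * P = P * M"
  shows "A' ^\<^sub>m k * P = P * M ^\<^sub>m k"
proof (induction k)
  case (Suc k)
  have "A' ^\<^sub>m Suc k * P = A' ^\<^sub>m k * (A' * P)"
    using assoc_mult_mat[OF pow_carrier_mat[OF A'] A' P] by simp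
  also have "\<dots> = (A' ^\<^sub>m k * P) * M"
    unfolding AP using assoc_mult_mat[OF pow_carrier_mat[OF A'] P M] by simp
  also have "\<dots> = P * M ^\<^sub>m Suc k"
    unfolding Suc.IH using assoc_mult_mat[OF P pow_carrier_mat[OF M] M] by simp
  finally show ?case .
qed (use A' P M in simp)

lemma reach_mat_intertwine:
  assumes A': "A' \<in> carrier_mat N' N'" and P: "P \<in> carrier_mat N' n'" and M: "M \<in> carrier_mat n' n'"
    and B0: "B0 \<in> carrier_mat n' m" and AP: "A' * P = P * M"
  shows "reach_mat A' (P * B0) N = P * reach_mat M B0 N"
proof (rule eq_matI)
  fix i j assume "i < dim_row (P * reach_mat M B0 N)" "j < dim_col (P * reach_mat M B0 N)"
  then have i: "i < N'" and "j < m * N" using P reach_mat_carrier[OF M B0, of N] by auto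
  then obtain c d where c: "c < N" and d: "d < m" and j: "j = c * m + d"
    by (auto elim: less_mult_blockE)
  have "A' ^\<^sub>m (N - 1 - c) * (P * B0) = (A' ^\<^sub>m (N - 1 - c) * P) * B0"
    using assoc_mult_mat[OF pow_carrier_mat[OF A'] P B0] by simp
  then have "A' ^\<^sub>m (N - 1 - c) * (P * B0) = P * M ^\<^sub>m (N - 1 - c) * B0"
    unfolding pow_mat_intertwine[OF A' P M AP] .
  moreover have "(P * reach_mat M B0 N) $$ (i, j) = (P * M ^\<^sub>m (N - 1 - c) * B0) $$ (i, d)"
    unfolding j using M B0 P i c d by (rule index_mult_reach_mat)
  ultimately show "reach_mat A' (P * B0) N $$ (i, j) = (P * reach_mat M B0 N) $$ (i, j)"
    using A' P B0 i c d j by (simp add: reach_mat_def del: index_mult_mat(1))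
qed (use A' P reach_mat_carrier[OF M B0, of N] in \<open>auto simp: reach_mat_def\<close>)

section \<open>The lifted realization\<close>

lemma A_mat_carrier: "A_mat A B C OL l \<in> carrier_mat (dim_row C * l + dim_col B * l) (dim_row C * l + dim_col B * l)"
  by (rule carrier_matI) (simp_all add: A_mat_def F_mat_def L_mat_def Z_mat_def Let_def)

locale lifted_system =
  fixes A B C OL :: "real mat" and n m p l :: nat
  assumes A: "A \<in> carrier_mat n n" and B: "B \<in> carrier_mat n m" and C: "C \<in> carrier_mat p n"
    and OL: "OL \<in> carrier_mat n (p * l)" and left_inverse: "OL * obs_mat A C l = 1\<^sub>m n"
    and l_pos: "0 < l"
begin

definition Phi :: "real mat" where
  "Phi = four_block_mat (obs_mat A C l) (toep_mat A B C l) (0\<^sub>m (m * l) n) (1\<^sub>m (m * l))"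

definition A_ext :: "real mat" where
  "A_ext = four_block_mat A (first_block_mat B l) (0\<^sub>m (m * l) n) (shift_mat m l)"

definition B_ext :: "real mat" where
  "B_ext = 0\<^sub>m n m @\<^sub>r block_unit_mat m l (l - 1)"

lemma Ob: "obs_mat A C l \<in> carrier_mat (p * l) n"
  and T: "toep_mat A B C l \<in> carrier_mat (p * l) (m * l)"
  and R: "reach_mat A B l \<in> carrier_mat n (m * l)"
  and FB: "first_block_mat B l \<in> carrier_mat n (m * l)"
  using obs_mat_carrier[OF A C] toep_mat_carrier[OF B C] reach_mat_carrier[OF A B]
    first_block_mat_carrier[OF B] by auto

lemma Phi_carrier: "Phi \<in> carrier_mat (p * l + m * l) (n + m * l)"
  unfolding Phi_def using Ob by simp

lemma A_ext_carrier: "A_ext \<in> carrier_mat (n + m * l) (n + m * l)"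
  unfolding A_ext_def using A by simp

lemma B_ext_carrier: "B_ext \<in> carrier_mat (n + m * l) m"
  unfolding B_ext_def by simp

lemma Z_mat_mult_Phi:
  "Z_mat A B C OL l * Phi
    = four_block_mat (C * A ^\<^sub>m l) (C * reach_mat A B l) (0\<^sub>m 0 n) (0\<^sub>m 0 (m * l))"
proof -
  define X where "X = C * A ^\<^sub>m l * OL"
  define Y where "Y = C * reach_mat A B l - X * toep_mat A B C l"
  have X: "X \<in> carrier_mat p (p * l)"
    unfolding X_def using mult_carrier_mat[OF mult_carrier_mat[OF C pow_carrier_mat[OF A]] OL] .
  have XT: "X * toep_mat A B C l \<in> carrier_mat p (m * l)" using X T by simp
  have CR: "C * reach_mat A B l \<in> carrier_mat p (m * l)" using C R by simp
  have Y: "Y \<in> carrier_mat p (m * l)" unfolding Y_def using XT by (rule minus_carrier_mat)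
  have "Z_mat A B C OL l * Phi = four_block_mat (X * obs_mat A C l + Y * 0\<^sub>m (m * l) n)
      (X * toep_mat A B C l + Y * 1\<^sub>m (m * l))
      (0\<^sub>m 0 (p * l) * obs_mat A C l + 0\<^sub>m 0 (m * l) * 0\<^sub>m (m * l) n)
      (0\<^sub>m 0 (p * l) * toep_mat A B C l + 0\<^sub>m 0 (m * l) * 1\<^sub>m (m * l))"
    unfolding Z_mat_four_block[OF A B C OL] X_def[symmetric] Y_def[symmetric] Phi_def
    by (rule mult_four_block_mat[OF X Y zero_carrier_mat zero_carrier_mat Ob T
          zero_carrier_mat one_carrier_mat])
  also have "\<dots> = four_block_mat (C * A ^\<^sub>m l) (C * reach_mat A B l) (0\<^sub>m 0 n) (0\<^sub>m 0 (m * l))"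
  proof (rule cong_four_block_mat)
    have "X * obs_mat A C l = C * A ^\<^sub>m l"
      unfolding X_def using assoc_mult_mat[OF mult_carrier_mat[OF C pow_carrier_mat[OF A]] OL Ob]
        left_inverse A C by simp
    then show "X * obs_mat A C l + Y * 0\<^sub>m (m * l) n = C * A ^\<^sub>m l" using A C Y by simp
    have "X * toep_mat A B C l + Y = C * reach_mat A B l"
      unfolding Y_def using carrier_matD[OF XT] carrier_matD[OF CR]
      by (intro eq_matI) (simp_all del: index_mult_mat(1))
    then show "X * toep_mat A B C l + Y * 1\<^sub>m (m * l) = C * reach_mat A B l" using Y by simp
  qed (use Ob T in simp_all)
  finally show ?thesis .
qed

lemma F_mat_mult_Phi:
  "F_mat p m l * Phi = four_block_mat (shift_mat p l * obs_mat A C l) (shift_mat p l * toep_mat A B C l)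
    (0\<^sub>m (m * l) n) (shift_mat m l)"
  unfolding F_mat_def Phi_def
  using mult_four_block_mat[OF shift_mat_carrier zero_carrier_mat zero_carrier_mat shift_mat_carrier
      Ob T zero_carrier_mat one_carrier_mat]
    mult_carrier_mat[OF shift_mat_carrier Ob] mult_carrier_mat[OF shift_mat_carrier T] Ob T
  by simp

lemma L_mat_mult_Z_mat_Phi:
  "L_mat p m l * (Z_mat A B C OL l * Phi) = four_block_mat (block_unit_mat p l (l - 1) * (C * A ^\<^sub>m l))
    (block_unit_mat p l (l - 1) * (C * reach_mat A B l)) (0\<^sub>m (m * l) n) (0\<^sub>m (m * l) (m * l))"
proof -
  have CAl: "C * A ^\<^sub>m l \<in> carrier_mat p n" using A C by simp
  have CR: "C * reach_mat A B l \<in> carrier_mat p (m * l)" using C R by simp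
  show ?thesis
    unfolding L_mat_append_rows Z_mat_mult_Phi append_rows_def
    using mult_four_block_mat[OF block_unit_mat_carrier zero_carrier_mat zero_carrier_mat zero_carrier_mat
        CAl CR zero_carrier_mat zero_carrier_mat] CAl CR
      mult_carrier_mat[OF block_unit_mat_carrier CAl] mult_carrier_mat[OF block_unit_mat_carrier CR]
      left_mult_zero_mat[OF CAl] left_mult_zero_mat[OF CR]
    by simp
qed

lemma A_mat_mult_Phi: "A_mat A B C OL l * Phi = Phi * A_ext"
proof -
  have dims: "dim_row C = p" "dim_col B = m" using B C by auto
  have F: "F_mat p m l \<in> carrier_mat (p * l + m * l) (p * l + m * l)" by (simp add: F_mat_def)
  have L: "L_mat p m l \<in> carrier_mat (p * l + m * l) p" by (simp add: L_mat_def)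
  have Z: "Z_mat A B C OL l \<in> carrier_mat p (p * l + m * l)" by (simp add: Z_mat_def Let_def dims)
  have CAl: "C * A ^\<^sub>m l \<in> carrier_mat p n" using A C by simp
  have CR: "C * reach_mat A B l \<in> carrier_mat p (m * l)" using C R by simp
  have "A_mat A B C OL l * Phi = F_mat p m l * Phi + L_mat p m l * (Z_mat A B C OL l * Phi)"
    unfolding A_mat_def dims
    using add_mult_distrib_mat[OF F mult_carrier_mat[OF L Z] Phi_carrier] assoc_mult_mat[OF L Z Phi_carrier]
    by simp
  also have "\<dots> = four_block_mat (obs_mat A C l * A)
      (obs_mat A C l * first_block_mat B l + toep_mat A B C l * shift_mat m l) (0\<^sub>m (m * l) n) (shift_mat m l)"
    unfolding F_mat_mult_Phi L_mat_mult_Z_mat_Phi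
      add_four_block_mat[OF mult_carrier_mat[OF shift_mat_carrier Ob]
        mult_carrier_mat[OF shift_mat_carrier T] zero_carrier_mat shift_mat_carrier
        mult_carrier_mat[OF block_unit_mat_carrier CAl] mult_carrier_mat[OF block_unit_mat_carrier CR]
        zero_carrier_mat zero_carrier_mat] shift_obs_mat[OF A C] shift_toep_mat[OF A B C]
    by simp
  also have "\<dots> = Phi * A_ext"
    unfolding Phi_def A_ext_def
    using mult_four_block_mat[OF Ob T zero_carrier_mat one_carrier_mat A FB zero_carrier_mat
        shift_mat_carrier] A Ob T FB by simp
  finally show ?thesis .
qed

lemma B_mat_eq: "B_mat p m l = Phi * B_ext"
proof -
  have E: "block_unit_mat m l (l - 1) \<in> carrier_mat (m * l) m" by simp
  have "Phi * B_ext = (obs_mat A C l * 0\<^sub>m n m + toep_mat A B C l * block_unit_mat m l (l - 1))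
      @\<^sub>r (0\<^sub>m (m * l) n * 0\<^sub>m n m + 1\<^sub>m (m * l) * block_unit_mat m l (l - 1))"
    unfolding Phi_def B_ext_def
    by (rule four_block_mat_mult_append_rows[OF Ob T zero_carrier_mat one_carrier_mat zero_carrier_mat E])
  also have "\<dots> = 0\<^sub>m (p * l) m @\<^sub>r block_unit_mat m l (l - 1)"
    using Ob E toep_mat_mult_last_block_unit_mat[OF B C] by simp
  finally show ?thesis using B_mat_append_rows[OF l_pos] by simp
qed

lemma reach_mat_A_mat:
  "reach_mat (A_mat A B C OL l) (B_mat p m l) N = Phi * reach_mat A_ext B_ext N"
proof -
  have "A_mat A B C OL l \<in> carrier_mat (p * l + m * l) (p * l + m * l)"
    using A_mat_carrier[of A B C OL l] B C by simp
  then show ?thesis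
    unfolding B_mat_eq
    using Phi_carrier A_ext_carrier B_ext_carrier A_mat_mult_Phi by (rule reach_mat_intertwine)
qed

lemma A_ext_mult_append_rows:
  assumes X: "X \<in> carrier_mat n m" and Y: "Y \<in> carrier_mat (m * l) m"
  shows "A_ext * (X @\<^sub>r Y) = (A * X + first_block_mat B l * Y) @\<^sub>r (shift_mat m l * Y)"
  unfolding A_ext_def
  using four_block_mat_mult_append_rows[OF A FB zero_carrier_mat shift_mat_carrier X Y] X Y
    mult_carrier_mat[OF shift_mat_carrier Y] by simp

lemma pow_A_ext_mult_B_ext:
  "A_ext ^\<^sub>m k * B_ext = (if k < l then 0\<^sub>m n m @\<^sub>r block_unit_mat m l (l - 1 - k)
    else (A ^\<^sub>m (k - l) * B) @\<^sub>r 0\<^sub>m (m * l) m)"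
proof (induction k)
  case 0
  have "A_ext ^\<^sub>m 0 * B_ext = B_ext" using A_ext_carrier B_ext_carrier by simp
  then show ?case using l_pos by (simp add: B_ext_def)
next
  case (Suc k)
  have "A_ext ^\<^sub>m Suc k * B_ext = A_ext * (A_ext ^\<^sub>m k * B_ext)"
    using pow_mat_intertwine[OF A_ext_carrier A_ext_carrier A_ext_carrier refl, of k]
      assoc_mult_mat[OF A_ext_carrier pow_carrier_mat[OF A_ext_carrier] B_ext_carrier] by simp
  also have "\<dots> = (if Suc k < l then 0\<^sub>m n m @\<^sub>r block_unit_mat m l (l - 1 - Suc k)
    else (A ^\<^sub>m (Suc k - l) * B) @\<^sub>r 0\<^sub>m (m * l) m)"
  proof (cases "k < l")
    case True
    then have "l - 1 - k < l" by simp
    then show ?thesis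
      using True Suc.IH A B first_block_mat_mult_block_unit_mat[OF B] shift_mat_mult_block_unit_mat
      by (auto simp: A_ext_mult_append_rows)
  next
    case False
    have "A * (A ^\<^sub>m (k - l) * B) = A ^\<^sub>m (Suc k - l) * B"
      using False pow_mat_intertwine[OF A A A refl, of "k - l"]
        assoc_mult_mat[OF A pow_carrier_mat[OF A] B] by (simp add: Suc_diff_le)
    moreover have "A ^\<^sub>m (k - l) * B \<in> carrier_mat n m"
      using mult_carrier_mat[OF pow_carrier_mat[OF A] B] .
    ultimately show ?thesis
      using False Suc.IH A FB A_ext_mult_append_rows[OF _ zero_carrier_mat]
        right_mult_zero_mat[OF FB] right_mult_zero_mat[OF shift_mat_carrier]
      by simp
  qed
  finally show ?case .
qed

lemma surjective_Phi:
  assumes "p * l = n"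
  shows "surjective_mat Phi"
proof -
  have Ob': "obs_mat A C l \<in> carrier_mat n n" and OL': "OL \<in> carrier_mat n n"
    using Ob OL assms by simp_all
  have "obs_mat A C l * OL = 1\<^sub>m n"
    using OL' Ob' left_inverse by (rule mat_mult_left_right_inverse)
  then have "surjective_mat (obs_mat A C l)"
    using Ob' OL' by (intro surjective_mat_if_right_inverse)
  then show ?thesis
    unfolding Phi_def using Ob T assms by (intro surjective_mat_four_block_one) auto
qed

lemma col_pow_A_ext_mult_B_ext:
  assumes "d < m"
  shows "k < l \<Longrightarrow> col (A_ext ^\<^sub>m k * B_ext) d = 0\<^sub>v n @\<^sub>v unit_vec (m * l) ((l - 1 - k) * m + d)"
    and "col (A_ext ^\<^sub>m (l + k) * B_ext) d = col (A ^\<^sub>m k * B) d @\<^sub>v 0\<^sub>v (m * l)"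
proof -
  assume "k < l"
  moreover have "l - 1 - k < l" using \<open>k < l\<close> by simp
  ultimately show "col (A_ext ^\<^sub>m k * B_ext) d = 0\<^sub>v n @\<^sub>v unit_vec (m * l) ((l - 1 - k) * m + d)"
    using col_append_rows[OF zero_carrier_mat block_unit_mat_carrier assms] assms
    by (simp add: pow_A_ext_mult_B_ext col_block_unit_mat[OF _ assms])
next
  have "A ^\<^sub>m k * B \<in> carrier_mat n m" using mult_carrier_mat[OF pow_carrier_mat[OF A] B] .
  then show "col (A_ext ^\<^sub>m (l + k) * B_ext) d = col (A ^\<^sub>m k * B) d @\<^sub>v 0\<^sub>v (m * l)"
    using col_append_rows[OF _ zero_carrier_mat assms] assms by (simp add: pow_A_ext_mult_B_ext)
qed

lemma set_cols_reach_block_subset: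
  assumes N: "l + n \<le> N"
  shows "set (cols (four_block_mat (reach_mat A B n) (0\<^sub>m n (m * l)) (0\<^sub>m (m * l) (m * n)) (1\<^sub>m (m * l))))
    \<subseteq> set (cols (reach_mat A_ext B_ext N))"
    (is "set (cols ?Y) \<subseteq> _")
proof
  have Rn: "reach_mat A B n \<in> carrier_mat n (m * n)" using A B by (rule reach_mat_carrier)
  fix v assume "v \<in> set (cols ?Y)"
  then obtain j where j: "j < m * n + m * l" and v: "v = col ?Y j" using Rn by (auto simp: cols_def)
  have "\<exists>k d. v = col (A_ext ^\<^sub>m k * B_ext) d \<and> k < N \<and> d < m"
  proof (cases "j < m * n")
    case True
    then obtain c d where c: "c < n" and d: "d < m" and jcd: "j = c * m + d"
      by (auto elim: less_mult_blockE)
    have "v = col (reach_mat A B n) (c * m + d) @\<^sub>v col (0\<^sub>m (m * l) (m * n)) (c * m + d)"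
      unfolding v jcd using True jcd
      by (intro col_four_block_mat(1)[OF Rn zero_carrier_mat zero_carrier_mat one_carrier_mat]) simp
    then have "v = col (A ^\<^sub>m (n - 1 - c) * B) d @\<^sub>v 0\<^sub>v (m * l)"
      using True jcd col_reach_mat[OF A B c d] by simp
    then have "v = col (A_ext ^\<^sub>m (l + (n - 1 - c)) * B_ext) d"
      using d by (simp add: col_pow_A_ext_mult_B_ext(2))
    then show ?thesis using c d N by (intro exI[of _ "l + (n - 1 - c)"] exI[of _ d]) auto
  next
    case False
    then have "j - m * n < m * l" using j by linarith
    then obtain b d where b: "b < l" and d: "d < m" and jbd: "j - m * n = b * m + d"
      by (rule less_mult_blockE)
    have "v = col (0\<^sub>m n (m * l)) (j - m * n) @\<^sub>v col (1\<^sub>m (m * l)) (j - m * n)"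
      unfolding v using False j
      by (intro col_four_block_mat(2)[OF Rn zero_carrier_mat zero_carrier_mat one_carrier_mat])
    also have "\<dots> = 0\<^sub>v n @\<^sub>v unit_vec (m * l) (b * m + d)"
      using False j unfolding jbd[symmetric] by simp
    also have "\<dots> = col (A_ext ^\<^sub>m (l - 1 - b) * B_ext) d"
      using b d by (simp add: col_pow_A_ext_mult_B_ext(1))
    finally show ?thesis using b d N by (intro exI[of _ "l - 1 - b"] exI[of _ d]) auto
  qed
  then show "v \<in> set (cols (reach_mat A_ext B_ext N))"
    unfolding set_cols_reach_mat[OF A_ext_carrier B_ext_carrier] by blast
qed

lemma surjective_reach_mat_ext:
  assumes "surjective_mat (reach_mat A B n)" and "l + n \<le> N"
  shows "surjective_mat (reach_mat A_ext B_ext N)"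
proof (rule surjective_mat_mono_cols)
  have Rn: "reach_mat A B n \<in> carrier_mat n (m * n)" using A B by (rule reach_mat_carrier)
  show "reach_mat A_ext B_ext N \<in> carrier_mat (n + m * l) (m * N)"
    using A_ext_carrier B_ext_carrier by (rule reach_mat_carrier)
  show "four_block_mat (reach_mat A B n) (0\<^sub>m n (m * l)) (0\<^sub>m (m * l) (m * n)) (1\<^sub>m (m * l))
      \<in> carrier_mat (n + m * l) (m * n + m * l)" using Rn by simp
  show "surjective_mat (four_block_mat (reach_mat A B n) (0\<^sub>m n (m * l)) (0\<^sub>m (m * l) (m * n)) (1\<^sub>m (m * l)))"
    using Rn zero_carrier_mat assms(1) by (rule surjective_mat_four_block_one)
qed (rule set_cols_reach_block_subset[OF assms(2)])

lemma reachable_A_mat_B_mat_iff: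
  assumes "reachable A B" and "0 < n"
  shows "reachable (A_mat A B C OL l) (B_mat p m l) \<longleftrightarrow> p * l = n"
proof -
  let ?N = "p * l + m * l"
  have reach_A_B: "surjective_mat (reach_mat A B n)"
    using assms(1) A by (simp add: reachable_iff_surjective)
  have "n \<le> m * n"
    using surjective_mat_dim_row_le[OF reach_A_B] reach_mat_carrier[OF A B, of n] by simp
  then have "0 < m" using assms(2) by (cases m) auto
  have "n \<le> p * l" using OL Ob left_inverse by (rule dim_le_if_right_inverse)
  have "dim_row (A_mat A B C OL l) = ?N" using A_mat_carrier[of A B C OL l] B C by simp
  then have "reachable (A_mat A B C OL l) (B_mat p m l)
      \<longleftrightarrow> surjective_mat (Phi * reach_mat A_ext B_ext ?N)"
    by (simp add: reachable_iff_surjective reach_mat_A_mat)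
  also have "\<dots> \<longleftrightarrow> p * l = n"
  proof
    assume "surjective_mat (Phi * reach_mat A_ext B_ext ?N)"
    then have "surjective_mat Phi"
      by (rule surjective_mat_mult_imp_left[OF Phi_carrier reach_mat_carrier[OF A_ext_carrier B_ext_carrier]])
    then have "?N \<le> n + m * l" using surjective_mat_dim_row_le Phi_carrier by fastforce
    then show "p * l = n" using \<open>n \<le> p * l\<close> by simp
  next
    assume "p * l = n"
    moreover have "l \<le> m * l" using \<open>0 < m\<close> by simp
    ultimately have "l + n \<le> ?N" by simp
    with \<open>p * l = n\<close> show "surjective_mat (Phi * reach_mat A_ext B_ext ?N)"
      by (intro surjective_mat_mult[OF Phi_carrier reach_mat_carrier[OF A_ext_carrier B_ext_carrier]]
          surjective_Phi surjective_reach_mat_ext[OF reach_A_B])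
  qed
  finally show ?thesis .
qed

end

lemma obs_index_eq_0: "dim_row A = 0 \<Longrightarrow> obs_index A C = 0"
  unfolding obs_index_def
  by (rule Least_eq_0) (simp add: mrank_eq_dim_row_iff_surjective[THEN iffD2, OF surjective_mat_no_rows]
      obs_mat_def)

lemma reachable_no_rows: "dim_row A = 0 \<Longrightarrow> reachable A B"
  by (simp add: reachable_iff_surjective surjective_mat_no_rows reach_mat_def)

theorem lemma2:
  fixes A B C OL :: "real mat" and n m p :: nat
  assumes "A \<in> carrier_mat n n" and "B \<in> carrier_mat n m" and "C \<in> carrier_mat p n"
    and "observable A C" and "reachable A B"
    and "OL \<in> carrier_mat n (p * obs_index A C)"
    and "OL * obs_mat A C (obs_index A C) = 1\<^sub>m n"
  shows "reachable (A_mat A B C OL (obs_index A C)) (B_mat p m (obs_index A C))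
         \<longleftrightarrow> p * obs_index A C = n"
proof (cases "n = 0")
  case True
  then have "obs_index A C = 0" using assms(1) by (simp add: obs_index_eq_0)
  then show ?thesis
    using True A_mat_carrier[of A B C OL 0] by (simp add: reachable_no_rows)
next
  case False
  let ?l = "obs_index A C"
  have "n \<le> p * ?l"
    using assms(6) obs_mat_carrier[OF assms(1,3)] assms(7) by (rule dim_le_if_right_inverse)
  with False have "0 < ?l" by (cases ?l) auto
  then interpret lifted_system A B C OL n m p ?l
    using assms by unfold_locales
  show ?thesis using assms(5) False by (simp add: reachable_A_mat_B_mat_iff)
qed

end
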